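(* Let $S\subset\mathbb{P}^6$ be the surface defined by $$x_1^2-x_2x_4=x_1x_5-x_3x_4=x_1x_3-x_2x_5=x_1x_6-x_3x_5=x_2x_6-x_3^2=x_4x_6-x_5^2=0,$$ $$x_1^2+x_1x_4+x_5x_7=x_1x_2+x_1^2+x_3x_7=x_1x_3+x_1x_5+x_6x_7=0,$$ let $U\subset S$ be the complement in $S$ of the three lines $x_1=x_2=x_3=x_5=x_6=0$, $x_1=x_3=x_4=x_5=x_6=0$, and $x_3=x_5=x_6=x_1+x_4=x_1+x_2=0$, and let $N_U(B)=\#\{x\in U(\mathbb{Q}):H(x)\leq B\}$. Let $M(B)$ denote the number of $\mathbf{x}\in\mathbb{Z}^7$ such that $$x_1^2-x_2x_4=x_1x_5-x_3x_4=x_1x_3-x_2x_5=x_1x_6-x_3x_5=x_2x_6-x_3^2=x_4x_6-x_5^2=0,$$ $$x_1^2-x_1x_4+x_5x_7=x_1^2-x_1x_2-x_3x_7=x_1x_3-x_1x_5+x_6x_7=0,$$ with $\gcd(x_1,\dots,x_7)=1$, $0<|x_1|\leq B$, $0<x_2,x_3,x_4\leq B$, $0<|x_5|\leq B$, $0<x_6\leq B$ and $|x_7|\leq B$. Then $$N_U(B)=2M(B)+O(B).$$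
   Context: For $x\in\mathbb{P}^{6}(\mathbb{Q})$ written as $x=[\mathbf{x}]$ with $\mathbf{x}\in\mathbb{Z}^7$ primitive, $H(x)=\max_i|x_i|$. The $O$-constant is absolute; $B\geq 1$. *)

theory Defs
  imports Complex_Main
begin

text \<open>Integer vectors in Z^7 are modelled as functions nat => int with coordinates
  x 1, ..., x 7 and x i = 0 outside {1..7}.\<close>

definition Z7 :: "(nat \<Rightarrow> int) set" where
  "Z7 = {x. \<forall>i. i \<notin> {1..7} \<longrightarrow> x i = 0}"

definition primitive7 :: "(nat \<Rightarrow> int) \<Rightarrow> bool" where
  "primitive7 x \<longleftrightarrow> x \<in> Z7 \<and> Gcd (x ` {1..7}) = 1"

definition height7 :: "(nat \<Rightarrow> int) \<Rightarrow> int" where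
  "height7 x = Max ((\<lambda>i. \<bar>x i\<bar>) ` {1..7})"

definition quad_eqs :: "(nat \<Rightarrow> int) \<Rightarrow> bool" where
  "quad_eqs x \<longleftrightarrow>
     x 1 ^ 2 - x 2 * x 4 = 0 \<and> x 1 * x 5 - x 3 * x 4 = 0 \<and> x 1 * x 3 - x 2 * x 5 = 0 \<and>
     x 1 * x 6 - x 3 * x 5 = 0 \<and> x 2 * x 6 - x 3 ^ 2 = 0 \<and> x 4 * x 6 - x 5 ^ 2 = 0"

text \<open>The equations of the surface S (homogeneous, so defined on integer representatives).\<close>
definition S_eqs :: "(nat \<Rightarrow> int) \<Rightarrow> bool" where
  "S_eqs x \<longleftrightarrow> quad_eqs x \<and>
     x 1 ^ 2 + x 1 * x 4 + x 5 * x 7 = 0 \<and>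
     x 1 * x 2 + x 1 ^ 2 + x 3 * x 7 = 0 \<and>
     x 1 * x 3 + x 1 * x 5 + x 6 * x 7 = 0"

definition on_lines :: "(nat \<Rightarrow> int) \<Rightarrow> bool" where
  "on_lines x \<longleftrightarrow>
     (x 1 = 0 \<and> x 2 = 0 \<and> x 3 = 0 \<and> x 5 = 0 \<and> x 6 = 0) \<or>
     (x 1 = 0 \<and> x 3 = 0 \<and> x 4 = 0 \<and> x 5 = 0 \<and> x 6 = 0) \<or>
     (x 3 = 0 \<and> x 5 = 0 \<and> x 6 = 0 \<and> x 1 + x 4 = 0 \<and> x 1 + x 2 = 0)"

text \<open>A rational point of P^6 is the class {x, -x} of a primitive integer vector x.
  N_U(B) counts such points of U = S minus the lines with H(x) <= B.\<close>
definition N_U :: "real \<Rightarrow> nat" where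
  "N_U B = card {{x, - x} | x. primitive7 x \<and> S_eqs x \<and> \<not> on_lines x
                              \<and> real_of_int (height7 x) \<le> B}"

definition M_count :: "real \<Rightarrow> nat" where
  "M_count B = card {x. x \<in> Z7 \<and> quad_eqs x \<and>
     x 1 ^ 2 - x 1 * x 4 + x 5 * x 7 = 0 \<and>
     x 1 ^ 2 - x 1 * x 2 - x 3 * x 7 = 0 \<and>
     x 1 * x 3 - x 1 * x 5 + x 6 * x 7 = 0 \<and>
     Gcd (x ` {1..7}) = 1 \<and>
     0 < \<bar>x 1\<bar> \<and> real_of_int \<bar>x 1\<bar> \<le> B \<and>
     0 < x 2 \<and> real_of_int (x 2) \<le> B \<and>
     0 < x 3 \<and> real_of_int (x 3) \<le> B \<and>
     0 < x 4 \<and> real_of_int (x 4) \<le> B \<and>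
     0 < \<bar>x 5\<bar> \<and> real_of_int \<bar>x 5\<bar> \<le> B \<and>
     0 < x 6 \<and> real_of_int (x 6) \<le> B \<and>
     real_of_int \<bar>x 7\<bar> \<le> B}"

end

theory Submission
  imports Defs
begin

text \<open>
  The points of \<open>U\<close> with \<open>x\<^sub>1 \<cdots> x\<^sub>6 \<noteq> 0\<close> are counted exactly. Normalising
  \<open>x\<^sub>2 > 0\<close> picks one representative per point; negating \<open>x\<^sub>3, x\<^sub>5, x\<^sub>7\<close>
  preserves \<open>S\<close> and swaps the sign of \<open>x\<^sub>3\<close>, so half of these representatives have
  \<open>x\<^sub>3 < 0\<close>, and negating \<open>x\<^sub>1, x\<^sub>3\<close> maps those bijectively onto the vectors
  counted by \<open>M(B)\<close>. All other points of \<open>U\<close> lie on one of the conics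
  \<open>x\<^sub>4 x\<^sub>6 = x\<^sub>5\<^sup>2\<close>, \<open>x\<^sub>2 x\<^sub>6 = x\<^sub>3\<^sup>2\<close> (all other coordinates zero), and a primitive
  solution of \<open>a c = b\<^sup>2\<close> is determined by the signs of \<open>a, b, c\<close> together with
  \<open>gcd(a, b)\<^sup>2 = \<bar>a\<bar>\<close> and \<open>gcd(b, c)\<^sup>2 = \<bar>c\<bar>\<close>, leaving \<open>O(B)\<close> of them.
\<close>

lemma abs_eq_gcd_square:
  fixes p q r :: int
  assumes eq: "p * r = q ^ 2" and coprime: "gcd p (gcd q r) = 1"
  shows "\<bar>r\<bar> = (gcd q r) ^ 2"
proof -
  have "(gcd p r) ^ 2 dvd q ^ 2"
    using eq by (metis mult_dvd_mono gcd_dvd1 gcd_dvd2 power2_eq_square)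
  then have "gcd p r dvd gcd p (gcd q r)" by simp
  then have pr: "gcd p r = 1" using coprime by simp
  have "(gcd q r) ^ 2 = gcd (q ^ 2) (r ^ 2)" by simp
  also have "\<dots> = gcd (r * p) (r * r)"
    using eq by (simp add: power2_eq_square mult.commute)
  also have "\<dots> = \<bar>r\<bar> * gcd p r" by (simp add: gcd_mult_distrib_int)
  also have "\<dots> = \<bar>r\<bar>" using pr by simp
  finally show ?thesis ..
qed

definition primitive_conic :: "real \<Rightarrow> (int \<times> int \<times> int) set" where
  "primitive_conic B = {(a, b, c). a * c = b ^ 2 \<and> gcd a (gcd b c) = 1 \<and>
     real_of_int \<bar>a\<bar> \<le> B \<and> real_of_int \<bar>c\<bar> \<le> B}"

lemma primitive_conic_eqI:
  fixes a b c a' b' c' :: int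
  assumes "a * c = b ^ 2" "a' * c' = b' ^ 2"
    and "gcd a (gcd b c) = 1" "gcd a' (gcd b' c') = 1"
    and "sgn a = sgn a'" "sgn b = sgn b'" "sgn c = sgn c'"
    and "gcd b a = gcd b' a'" "gcd b c = gcd b' c'"
  shows "(a, b, c) = (a', b', c')"
proof -
  have "\<bar>c\<bar> = \<bar>c'\<bar>"
    using abs_eq_gcd_square[of a c b] abs_eq_gcd_square[of a' c' b'] assms by simp
  then have c: "c = c'" using assms(7) by (metis mult_sgn_abs)
  have "\<bar>a\<bar> = \<bar>a'\<bar>"
    using abs_eq_gcd_square[of c a b] abs_eq_gcd_square[of c' a' b'] assms
    by (simp add: ac_simps)
  then have a: "a = a'" using assms(5) by (metis mult_sgn_abs)
  have "\<bar>b\<bar> ^ 2 = \<bar>b'\<bar> ^ 2" using assms(1,2) a c by simp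
  then have "\<bar>b\<bar> = \<bar>b'\<bar>" by (simp only: power2_eq_iff_nonneg abs_ge_zero)
  then have "b = b'" using assms(6) by (metis mult_sgn_abs)
  with a c show ?thesis by simp
qed

lemma gcd_le_floor_sqrt:
  fixes g r :: int
  assumes "\<bar>r\<bar> = g ^ 2" "real_of_int \<bar>r\<bar> \<le> B"
  shows "g \<le> \<lfloor>sqrt B\<rfloor>"
proof -
  have "real_of_int g ^ 2 \<le> B" using assms by (metis of_int_power)
  then have "real_of_int g \<le> sqrt B" by (rule real_le_rsqrt)
  then show ?thesis by (simp add: le_floor_iff)
qed

lemma card_primitive_conic_le:
  "finite (primitive_conic B) \<and> card (primitive_conic B) \<le> 27 * nat (\<lfloor>sqrt B\<rfloor> + 1) ^ 2"
proof -
  define R where "R = {0..\<lfloor>sqrt B\<rfloor>}"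
  define T :: "(int \<times> int \<times> int \<times> int \<times> int) set"
    where "T = {-1, 0, 1} \<times> {-1, 0, 1} \<times> {-1, 0, 1} \<times> R \<times> R"
  define f where "f = (\<lambda>(a, b, c). (sgn a, sgn b, sgn c, gcd b a, gcd b c :: int))"
  have "inj_on f (primitive_conic B)"
  proof (rule inj_onI)
    fix u v assume uv: "u \<in> primitive_conic B" "v \<in> primitive_conic B" "f u = f v"
    obtain a b c a' b' c' where uv_eq: "u = (a, b, c)" "v = (a', b', c')" by (cases u, cases v)
    show "u = v" unfolding uv_eq
      by (rule primitive_conic_eqI) (use uv in \<open>simp_all add: uv_eq primitive_conic_def f_def\<close>)
  qed
  moreover have "f ` primitive_conic B \<subseteq> T"
  proof
    fix y assume "y \<in> f ` primitive_conic B"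
    then obtain a b c where abc: "(a, b, c) \<in> primitive_conic B" and y: "y = f (a, b, c)"
      by auto
    from abc have "\<bar>a\<bar> = (gcd b a) ^ 2" "\<bar>c\<bar> = (gcd b c) ^ 2"
      using abs_eq_gcd_square[of c a b] abs_eq_gcd_square[of a c b]
      by (auto simp: primitive_conic_def ac_simps)
    moreover have "real_of_int \<bar>a\<bar> \<le> B" "real_of_int \<bar>c\<bar> \<le> B"
      using abc by (simp_all add: primitive_conic_def)
    ultimately have "gcd b a \<in> R" "gcd b c \<in> R"
      unfolding R_def by (auto intro: gcd_le_floor_sqrt)
    then show "y \<in> T" by (simp add: y f_def T_def sgn_if)
  qed
  moreover have "finite T" "card T = 27 * nat (\<lfloor>sqrt B\<rfloor> + 1) ^ 2"
    by (simp_all add: T_def R_def card_cartesian_product power2_eq_square)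
  ultimately show ?thesis by (metis card_inj_on_le inj_on_finite)
qed

lemma card_primitive_conic_le_linear:
  assumes "B \<ge> 1"
  shows "real (card (primitive_conic B)) \<le> 108 * B"
proof -
  define n where "n = nat (\<lfloor>sqrt B\<rfloor> + 1)"
  have "real n = real_of_int \<lfloor>sqrt B\<rfloor> + 1" using assms by (simp add: n_def)
  also have "\<dots> \<le> 2 * sqrt B"
    using assms of_int_floor_le[of "sqrt B"] real_sqrt_ge_one[of B] by linarith
  finally have "real n ^ 2 \<le> (2 * sqrt B) ^ 2" by (intro power_mono) simp_all
  also have "\<dots> = 4 * B" using assms by (simp add: power_mult_distrib)
  finally have "real n ^ 2 \<le> 4 * B" .
  moreover have "real (card (primitive_conic B)) \<le> 27 * real n ^ 2"
    using card_primitive_conic_le[of B] unfolding n_def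
    by (metis of_nat_le_iff of_nat_mult of_nat_numeral of_nat_power)
  ultimately show ?thesis by linarith
qed

lemma card_image_involution_pairs:
  assumes closed: "\<And>x. x \<in> A \<Longrightarrow> \<sigma> x \<in> A"
    and involution: "\<And>x. x \<in> A \<Longrightarrow> \<sigma> (\<sigma> x) = x"
    and half: "\<And>x. x \<in> A \<Longrightarrow> P (\<sigma> x) \<longleftrightarrow> \<not> P x"
  shows "card ((\<lambda>x. {x, \<sigma> x}) ` A) = card {x \<in> A. P x}"
proof -
  have "(\<lambda>x. {x, \<sigma> x}) ` A = (\<lambda>x. {x, \<sigma> x}) ` {x \<in> A. P x}"
  proof (intro equalityI subsetI)
    fix p assume "p \<in> (\<lambda>x. {x, \<sigma> x}) ` A"
    then obtain x where x: "x \<in> A" "p = {x, \<sigma> x}" by blast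
    show "p \<in> (\<lambda>x. {x, \<sigma> x}) ` {x \<in> A. P x}"
    proof (cases "P x")
      case False
      then have "\<sigma> x \<in> {x \<in> A. P x}" using x closed half by simp
      moreover have "p = {\<sigma> x, \<sigma> (\<sigma> x)}" using x involution by auto
      ultimately show ?thesis by blast
    qed (use x in blast)
  qed blast
  moreover have "inj_on (\<lambda>x. {x, \<sigma> x}) {x \<in> A. P x}"
  proof (rule inj_onI)
    fix x y assume "x \<in> {x \<in> A. P x}" "y \<in> {x \<in> A. P x}" "{x, \<sigma> x} = {y, \<sigma> y}"
    then show "x = y" using half by (auto simp: doubleton_eq_iff)
  qed
  ultimately show ?thesis by (simp add: card_image)
qed

lemma one_to_seven: "{1..7::nat} = {1, 2, 3, 4, 5, 6, 7}"
  by auto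

definition sign_flip :: "nat set \<Rightarrow> (nat \<Rightarrow> int) \<Rightarrow> nat \<Rightarrow> int" where
  "sign_flip I x = (\<lambda>i. if i \<in> I then - x i else x i)"

text \<open>Not a simp rule: it would fire on the \<eta>-expansion of \<open>sign_flip I x\<close> inside images and
  pre-empt the invariance rules below.\<close>

lemma sign_flip_apply: "sign_flip I x i = (if i \<in> I then - x i else x i)"
  by (simp add: sign_flip_def)

lemma abs_sign_flip [simp]: "\<bar>sign_flip I x i\<bar> = \<bar>x i\<bar>"
  by (simp add: sign_flip_def)

lemma sign_flip_sign_flip [simp]: "sign_flip I (sign_flip I x) = x"
  by (simp add: sign_flip_def fun_eq_iff)

lemma Z7_abs_cong: "x \<in> Z7 \<Longrightarrow> (\<And>i. \<bar>y i\<bar> = \<bar>x i\<bar>) \<Longrightarrow> y \<in> Z7"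
  by (simp add: Z7_def) (metis abs_0_eq)

lemma Gcd_image_abs_cong:
  fixes x y :: "'a \<Rightarrow> int"
  assumes "\<And>i. \<bar>y i\<bar> = \<bar>x i\<bar>"
  shows "Gcd (y ` I) = Gcd (x ` I)"
proof -
  have dvd_iff: "\<And>d i. d dvd y i \<longleftrightarrow> d dvd x i"
    by (metis assms dvd_abs_iff)
  have "Gcd (y ` I) dvd Gcd (x ` I)"
    by (rule Gcd_greatest) (metis Gcd_dvd dvd_iff imageE imageI)
  moreover have "Gcd (x ` I) dvd Gcd (y ` I)"
    by (rule Gcd_greatest) (metis Gcd_dvd dvd_iff imageE imageI)
  ultimately show ?thesis by (simp add: zdvd_antisym_nonneg)
qed

lemma height7_abs_cong: "(\<And>i. \<bar>y i\<bar> = \<bar>x i\<bar>) \<Longrightarrow> height7 y = height7 x"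
  by (simp add: height7_def)

lemma height7_le_iff:
  "real_of_int (height7 x) \<le> B \<longleftrightarrow> (\<forall>i\<in>{1..7}. real_of_int \<bar>x i\<bar> \<le> B)"
proof -
  let ?H = "(\<lambda>i. \<bar>x i\<bar>) ` {1..7::nat}"
  have "finite ?H" "?H \<noteq> {}" by auto
  then have "height7 x \<in> ?H" "\<forall>h\<in>?H. h \<le> height7 x"
    unfolding height7_def by auto
  then show ?thesis by (metis (no_types, lifting) imageE imageI of_int_le_iff order_trans)
qed

lemma Z7_sign_flip_iff [simp]: "sign_flip I x \<in> Z7 \<longleftrightarrow> x \<in> Z7"
  by (metis Z7_abs_cong abs_sign_flip)

lemma Gcd_image_sign_flip [simp]: "Gcd (sign_flip I x ` A) = Gcd (x ` A)"
  by (rule Gcd_image_abs_cong) simp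

lemma height7_sign_flip [simp]: "height7 (sign_flip I x) = height7 x"
  by (rule height7_abs_cong) simp

lemma finite_height7_le: "finite {x \<in> Z7. real_of_int (height7 x) \<le> B}"
proof (rule finite_subset)
  let ?K = "\<lfloor>B\<rfloor>"
  have "\<bar>x i\<bar> \<le> ?K" if "real_of_int (height7 x) \<le> B" "i \<in> {1..7}" for x i
    using that by (simp add: height7_le_iff le_floor_iff)
  then show "{x \<in> Z7. real_of_int (height7 x) \<le> B} \<subseteq>
        {x. \<forall>i. (i \<in> {1..7} \<longrightarrow> x i \<in> {-?K..?K}) \<and> (i \<notin> {1..7} \<longrightarrow> x i = 0)}"
    by (fastforce simp: Z7_def abs_le_iff)
  show "finite {x. \<forall>i. (i \<in> {1..7::nat} \<longrightarrow> x i \<in> {-?K..?K}) \<and> (i \<notin> {1..7} \<longrightarrow> x i = 0)}"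
    by (rule finite_set_of_finite_funs) simp_all
qed

definition U_reps :: "real \<Rightarrow> (nat \<Rightarrow> int) set" where
  "U_reps B = {x. primitive7 x \<and> S_eqs x \<and> \<not> on_lines x \<and> real_of_int (height7 x) \<le> B}"

lemma N_U_eq_card_U_reps: "N_U B = card ((\<lambda>x. {x, - x}) ` U_reps B)"
proof -
  have "{{x, - x} | x. primitive7 x \<and> S_eqs x \<and> \<not> on_lines x \<and> real_of_int (height7 x) \<le> B}
      = (\<lambda>x. {x, - x}) ` U_reps B"
    unfolding U_reps_def by blast
  then show ?thesis unfolding N_U_def by simp
qed

lemma finite_U_reps: "finite (U_reps B)"
  by (rule finite_subset[OF _ finite_height7_le[of B]]) (auto simp: U_reps_def primitive7_def)

definition coords_nonzero :: "(nat \<Rightarrow> int) \<Rightarrow> bool" where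
  "coords_nonzero x \<longleftrightarrow> x 1 \<noteq> 0 \<and> x 2 \<noteq> 0 \<and> x 3 \<noteq> 0 \<and> x 4 \<noteq> 0 \<and> x 5 \<noteq> 0 \<and> x 6 \<noteq> 0"

definition generic_reps :: "real \<Rightarrow> (nat \<Rightarrow> int) set" where
  "generic_reps B = {x \<in> U_reps B. coords_nonzero x}"

definition special_reps :: "real \<Rightarrow> (nat \<Rightarrow> int) set" where
  "special_reps B = {x \<in> U_reps B. \<not> coords_nonzero x}"

lemma mem_generic_reps_iff:
  "x \<in> generic_reps B \<longleftrightarrow> x \<in> Z7 \<and> Gcd (x ` {1..7}) = 1 \<and> S_eqs x \<and> coords_nonzero x
     \<and> real_of_int (height7 x) \<le> B"
  by (auto simp: generic_reps_def U_reps_def primitive7_def coords_nonzero_def on_lines_def)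

lemma generic_reps_abs_cong:
  assumes x: "x \<in> generic_reps B" and abs_eq: "\<And>i. \<bar>y i\<bar> = \<bar>x i\<bar>" and "S_eqs y"
  shows "y \<in> generic_reps B"
proof -
  have "y i \<noteq> 0 \<longleftrightarrow> x i \<noteq> 0" for i using abs_eq by (metis abs_eq_0)
  then have "coords_nonzero y" using x by (simp add: mem_generic_reps_iff coords_nonzero_def)
  moreover have "y \<in> Z7" using x by (intro Z7_abs_cong[OF _ abs_eq]) (simp add: mem_generic_reps_iff)
  moreover have "Gcd (y ` {1..7}) = Gcd (x ` {1..7})" using abs_eq by (rule Gcd_image_abs_cong)
  moreover have "height7 y = height7 x" using abs_eq by (rule height7_abs_cong)
  ultimately show ?thesis using assms by (simp add: mem_generic_reps_iff)
qed

definition M_eqs :: "(nat \<Rightarrow> int) \<Rightarrow> bool" where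
  "M_eqs x \<longleftrightarrow> quad_eqs x \<and>
     x 1 ^ 2 - x 1 * x 4 + x 5 * x 7 = 0 \<and>
     x 1 ^ 2 - x 1 * x 2 - x 3 * x 7 = 0 \<and>
     x 1 * x 3 - x 1 * x 5 + x 6 * x 7 = 0"

lemma S_eqs_sign_flip_13: "S_eqs (sign_flip {1, 3} x) \<longleftrightarrow> M_eqs x"
  unfolding S_eqs_def M_eqs_def quad_eqs_def sign_flip_def
  by (auto simp: power2_eq_square algebra_simps)

lemma S_eqs_sign_flip_357: "S_eqs (sign_flip {3, 5, 7} x) \<longleftrightarrow> S_eqs x"
  unfolding S_eqs_def quad_eqs_def sign_flip_def
  by (auto simp: power2_eq_square algebra_simps)

definition M_reps :: "real \<Rightarrow> (nat \<Rightarrow> int) set" where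
  "M_reps B = {x. x \<in> Z7 \<and> M_eqs x \<and> Gcd (x ` {1..7}) = 1 \<and> real_of_int (height7 x) \<le> B \<and>
     x 1 \<noteq> 0 \<and> 0 < x 2 \<and> 0 < x 3 \<and> 0 < x 4 \<and> x 5 \<noteq> 0 \<and> 0 < x 6}"

lemma M_count_eq_card_M_reps: "M_count B = card (M_reps B)"
proof -
  have "real_of_int (height7 x) \<le> B \<longleftrightarrow> real_of_int \<bar>x 1\<bar> \<le> B \<and> real_of_int (x 2) \<le> B \<and>
      real_of_int (x 3) \<le> B \<and> real_of_int (x 4) \<le> B \<and> real_of_int \<bar>x 5\<bar> \<le> B \<and>
      real_of_int (x 6) \<le> B \<and> real_of_int \<bar>x 7\<bar> \<le> B"
    if "0 < x 2" "0 < x 3" "0 < x 4" "0 < x 6" for x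
    unfolding height7_le_iff one_to_seven using that by (simp del: of_int_abs)
  then show ?thesis
    unfolding M_count_def M_reps_def M_eqs_def zero_less_abs_iff
    by (intro arg_cong[where f = card] Collect_cong) blast
qed

lemma S_eqs_uminus: "S_eqs (- x) \<longleftrightarrow> S_eqs x"
  unfolding S_eqs_def quad_eqs_def by (simp add: power2_eq_square)

lemma pos_of_square_eq_mult:
  fixes a b c :: int
  assumes "0 < a" "b \<noteq> 0" "b ^ 2 = a * c"
  shows "0 < c"
  using assms by (metis zero_less_power2 zero_less_mult_iff not_less_iff_gr_or_eq)

lemma bij_betw_sign_flip_13:
  "bij_betw (sign_flip {1, 3}) {x \<in> generic_reps B. 0 < x 2 \<and> x 3 < 0} (M_reps B)"
proof (rule bij_betw_byWitness[where f' = "sign_flip {1, 3}"])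
  show "sign_flip {1, 3} ` {x \<in> generic_reps B. 0 < x 2 \<and> x 3 < 0} \<subseteq> M_reps B"
  proof clarify
    fix x assume x: "x \<in> generic_reps B" "0 < x 2" "x 3 < 0"
    then have "S_eqs x" "coords_nonzero x" by (simp_all add: mem_generic_reps_iff)
    then have "x 1 ^ 2 = x 2 * x 4" "x 3 ^ 2 = x 2 * x 6"
      by (simp_all add: S_eqs_def quad_eqs_def)
    then have "0 < x 4" "0 < x 6"
      using x(2) \<open>coords_nonzero x\<close>
      by (auto simp: coords_nonzero_def intro: pos_of_square_eq_mult)
    moreover have "M_eqs (sign_flip {1, 3} x)"
      using \<open>S_eqs x\<close> S_eqs_sign_flip_13[of "sign_flip {1, 3} x"] by simp
    ultimately show "sign_flip {1, 3} x \<in> M_reps B"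
      using x \<open>coords_nonzero x\<close> unfolding M_reps_def
      by (simp add: mem_generic_reps_iff coords_nonzero_def) (simp add: sign_flip_apply)
  qed
  show "sign_flip {1, 3} ` M_reps B \<subseteq> {x \<in> generic_reps B. 0 < x 2 \<and> x 3 < 0}"
  proof
    fix x assume "x \<in> sign_flip {1, 3} ` M_reps B"
    then obtain y where y: "y \<in> M_reps B" and x: "x = sign_flip {1, 3} y" by blast
    have "x \<in> generic_reps B" "0 < x 2" "x 3 < 0"
      using y S_eqs_sign_flip_13[of y] unfolding x M_reps_def mem_generic_reps_iff coords_nonzero_def
      by simp_all (simp_all add: sign_flip_apply)
    then show "x \<in> {x \<in> generic_reps B. 0 < x 2 \<and> x 3 < 0}" by simp
  qed
qed simp_all

lemma card_generic_pairs: "card ((\<lambda>x. {x, - x}) ` generic_reps B) = 2 * M_count B"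
proof -
  let ?G = "generic_reps B"
  have fin: "finite ?G" using finite_U_reps[of B] by (simp add: generic_reps_def)
  have neg: "- x \<in> ?G" if "x \<in> ?G" for x
    using that by (rule generic_reps_abs_cong)
      (use that in \<open>simp_all add: mem_generic_reps_iff S_eqs_uminus\<close>)
  have "card ((\<lambda>x. {x, - x}) ` ?G) = card {x \<in> ?G. 0 < x 2}"
    by (rule card_image_involution_pairs[where \<sigma> = uminus, OF neg])
      (auto simp: mem_generic_reps_iff coords_nonzero_def)
  also have "{x \<in> ?G. 0 < x 2} = {x \<in> ?G. 0 < x 2 \<and> x 3 < 0} \<union> {x \<in> ?G. 0 < x 2 \<and> 0 < x 3}"
    by (auto simp: mem_generic_reps_iff coords_nonzero_def)
  also have "card \<dots> = card {x \<in> ?G. 0 < x 2 \<and> x 3 < 0} + card {x \<in> ?G. 0 < x 2 \<and> 0 < x 3}"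
    using fin by (intro card_Un_disjoint) auto
  also have "card {x \<in> ?G. 0 < x 2 \<and> 0 < x 3} = card {x \<in> ?G. 0 < x 2 \<and> x 3 < 0}"
  proof (rule bij_betw_same_card[of "sign_flip {3, 5, 7}"],
         rule bij_betw_byWitness[where f' = "sign_flip {3, 5, 7}"])
    have "sign_flip {3, 5, 7} x \<in> ?G" if "x \<in> ?G" for x
      using that by (rule generic_reps_abs_cong)
        (use that in \<open>simp_all add: S_eqs_sign_flip_357 mem_generic_reps_iff\<close>)
    then show "sign_flip {3, 5, 7} ` {x \<in> ?G. 0 < x 2 \<and> 0 < x 3} \<subseteq> {x \<in> ?G. 0 < x 2 \<and> x 3 < 0}"
      "sign_flip {3, 5, 7} ` {x \<in> ?G. 0 < x 2 \<and> x 3 < 0} \<subseteq> {x \<in> ?G. 0 < x 2 \<and> 0 < x 3}"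
      by (auto simp: sign_flip_apply)
  qed simp_all
  also have "card {x \<in> ?G. 0 < x 2 \<and> x 3 < 0} = M_count B"
    using bij_betw_same_card[OF bij_betw_sign_flip_13] M_count_eq_card_M_reps by simp
  finally show ?thesis by (simp only: mult_2)
qed

lemma special_rep_degenerate:
  assumes "S_eqs x" "\<not> on_lines x" "\<not> coords_nonzero x"
  shows "x 1 = 0 \<and> x 7 = 0 \<and> (x 2 = 0 \<and> x 3 = 0 \<or> x 4 = 0 \<and> x 5 = 0)"
proof -
  have q1: "x 1 ^ 2 = x 2 * x 4" and q5: "x 2 * x 6 = x 3 ^ 2" and q6: "x 4 * x 6 = x 5 ^ 2"
    and e1: "x 1 ^ 2 + x 1 * x 4 + x 5 * x 7 = 0" and e2: "x 1 * x 2 + x 1 ^ 2 + x 3 * x 7 = 0"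
    and e3: "x 1 * x 3 + x 1 * x 5 + x 6 * x 7 = 0"
    using assms(1) by (auto simp: S_eqs_def quad_eqs_def)
  have x6: "x 6 \<noteq> 0"
  proof
    assume x6: "x 6 = 0"
    then have x35: "x 3 = 0" "x 5 = 0" using q5 q6 by simp_all
    then have "x 1 * (x 1 + x 4) = 0" "x 1 * (x 1 + x 2) = 0"
      using e1 e2 by (simp_all add: algebra_simps power2_eq_square)
    then show False
      using assms(2) q1 x6 x35 by (cases "x 1 = 0") (auto simp: on_lines_def)
  qed
  have "x 2 = 0 \<or> x 4 = 0"
  proof (rule ccontr)
    assume "\<not> (x 2 = 0 \<or> x 4 = 0)"
    then have "x 1 ^ 2 \<noteq> 0" "x 3 ^ 2 \<noteq> 0" "x 5 ^ 2 \<noteq> 0"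
      using q1 q5 q6 x6 by (metis mult_eq_0_iff)+
    then show False using assms(3) x6 \<open>\<not> (x 2 = 0 \<or> x 4 = 0)\<close> by (simp add: coords_nonzero_def)
  qed
  then have "x 1 = 0" "x 2 = 0 \<and> x 3 = 0 \<or> x 4 = 0 \<and> x 5 = 0"
    using q1 q5 q6 by auto
  moreover from this(1) have "x 7 = 0" using e3 x6 by simp
  ultimately show ?thesis by blast
qed

definition conic_embed :: "nat \<Rightarrow> nat \<Rightarrow> nat \<Rightarrow> int \<times> int \<times> int \<Rightarrow> nat \<Rightarrow> int" where
  "conic_embed i j k = (\<lambda>(a, b, c) n. if n = i then a else if n = j then b else if n = k then c else 0)"

lemma Z7_eq_conic_embed:
  assumes "x \<in> Z7" "\<And>n. n \<in> {1..7} \<Longrightarrow> n \<notin> {i, j, k} \<Longrightarrow> x n = 0"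
  shows "x = conic_embed i j k (x i, x j, x k)"
  using assms by (auto simp: Z7_def conic_embed_def fun_eq_iff)

lemma special_reps_subset:
  "special_reps B \<subseteq> conic_embed 4 5 6 ` primitive_conic B \<union> conic_embed 2 3 6 ` primitive_conic B"
proof
  fix x assume "x \<in> special_reps B"
  then have x: "x \<in> Z7" "Gcd (x ` {1..7}) = 1" "S_eqs x" "\<not> on_lines x" "\<not> coords_nonzero x"
    and bounds: "\<forall>i\<in>{1..7}. real_of_int \<bar>x i\<bar> \<le> B"
    by (simp_all add: special_reps_def U_reps_def primitive7_def height7_le_iff)
  have conics: "x 4 * x 6 = x 5 ^ 2" "x 2 * x 6 = x 3 ^ 2"
    using x(3) by (simp_all add: S_eqs_def quad_eqs_def)
  have "real_of_int \<bar>x 2\<bar> \<le> B" "real_of_int \<bar>x 4\<bar> \<le> B" "real_of_int \<bar>x 6\<bar> \<le> B"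
    using bounds by simp_all
  note conic_data = conics this x(2)
  have x17: "x 1 = 0" "x 7 = 0" and "x 2 = 0 \<and> x 3 = 0 \<or> x 4 = 0 \<and> x 5 = 0"
    using special_rep_degenerate[OF x(3-5)] by simp_all
  then show "x \<in> conic_embed 4 5 6 ` primitive_conic B \<union> conic_embed 2 3 6 ` primitive_conic B"
  proof (elim disjE conjE)
    assume "x 2 = 0" "x 3 = 0"
    then have "x = conic_embed 4 5 6 (x 4, x 5, x 6)"
      using x17 by (intro Z7_eq_conic_embed[OF x(1)]) (unfold one_to_seven, auto)
    moreover have "(x 4, x 5, x 6) \<in> primitive_conic B"
      using conic_data x17 \<open>x 2 = 0\<close> \<open>x 3 = 0\<close> unfolding primitive_conic_def one_to_seven by simp
    ultimately show ?thesis by blast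
  next
    assume "x 4 = 0" "x 5 = 0"
    then have "x = conic_embed 2 3 6 (x 2, x 3, x 6)"
      using x17 by (intro Z7_eq_conic_embed[OF x(1)]) (unfold one_to_seven, auto)
    moreover have "(x 2, x 3, x 6) \<in> primitive_conic B"
      using conic_data x17 \<open>x 4 = 0\<close> \<open>x 5 = 0\<close> unfolding primitive_conic_def one_to_seven by simp
    ultimately show ?thesis by blast
  qed
qed

lemma card_special_reps_le: "card (special_reps B) \<le> 2 * card (primitive_conic B)"
proof -
  let ?C = "primitive_conic B"
  have fin: "finite ?C" using card_primitive_conic_le by blast
  have "card (special_reps B) \<le> card (conic_embed 4 5 6 ` ?C \<union> conic_embed 2 3 6 ` ?C)"
    by (rule card_mono) (use fin special_reps_subset in auto)
  also have "\<dots> \<le> card (conic_embed 4 5 6 ` ?C) + card (conic_embed 2 3 6 ` ?C)"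
    by (rule card_Un_le)
  also have "\<dots> \<le> card ?C + card ?C"
    using fin by (intro add_mono card_image_le)
  finally show ?thesis by simp
qed

theorem lemma3p1:
  shows "\<exists>C::real. \<forall>B::real. B \<ge> 1 \<longrightarrow>
           \<bar>real (N_U B) - 2 * real (M_count B)\<bar> \<le> C * B"
proof (intro exI allI impI)
  fix B :: real assume "B \<ge> 1"
  let ?pairs = "\<lambda>A. (\<lambda>x :: nat \<Rightarrow> int. {x, - x}) ` A"
  have "U_reps B = generic_reps B \<union> special_reps B"
    by (auto simp: generic_reps_def special_reps_def)
  then have N: "N_U B = card (?pairs (generic_reps B) \<union> ?pairs (special_reps B))"
    by (simp add: N_U_eq_card_U_reps image_Un)
  have fin: "finite (generic_reps B)" "finite (special_reps B)"
    using finite_U_reps[of B] by (simp_all add: generic_reps_def special_reps_def)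
  have "card (?pairs (generic_reps B)) \<le> N_U B"
    unfolding N by (rule card_mono) (use fin in auto)
  moreover have "N_U B \<le> card (?pairs (generic_reps B)) + card (?pairs (special_reps B))"
    unfolding N by (rule card_Un_le)
  moreover have "card (?pairs (special_reps B)) \<le> card (special_reps B)"
    using fin(2) by (rule card_image_le)
  ultimately have "\<bar>real (N_U B) - 2 * real (M_count B)\<bar> \<le> real (card (special_reps B))"
    using card_generic_pairs[of B] by linarith
  also have "\<dots> \<le> 2 * real (card (primitive_conic B))"
    using card_special_reps_le[of B] by linarith
  also have "\<dots> \<le> 216 * B"
    using card_primitive_conic_le_linear[OF \<open>B \<ge> 1\<close>] by linarith
  finally show "\<bar>real (N_U B) - 2 * real (M_count B)\<bar> \<le> 216 * B" .
qed

end
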